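(* Let $(V,\mathrm{dist})$ be a metric space and let $B\subseteq A\subseteq V$ be finite (multi)sets. Then $$\mathrm{MaxCut}(B)+\tfrac14\,\mathrm{cut}(A\setminus B,A\setminus B)+\tfrac12\,\mathrm{cut}(A\setminus B,B)\ \le\ \mathrm{MaxCut}(A).$$
   Context: For $S,T\subseteq V$, $\mathrm{cut}(S,T):=\sum_{x\in S}\sum_{y\in T}\mathrm{dist}(x,y)$, and $\mathrm{MaxCut}(S):=\max_{T\subseteq S}\mathrm{cut}(T,S\setminus T)$. *)

theory Defs
  imports "HOL-Analysis.Analysis" "HOL-Library.Multiset"
begin

definition cut :: "'a::metric_space multiset \<Rightarrow> 'a multiset \<Rightarrow> real" where
  "cut S T = (\<Sum>x\<in>#S. \<Sum>y\<in>#T. dist x y)"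

text \<open>MaxCut(S) = max over sub-multisets T of S of cut(T, S - T).
  The set of sub-multisets of a (finite) multiset is finite and nonempty.\<close>
definition MaxCut :: "'a::metric_space multiset \<Rightarrow> real" where
  "MaxCut S = Max ((\<lambda>T. cut T (S - T)) ` {T. T \<subseteq># S})"

end

theory Submission
  imports Defs
begin

(* Insert the points of A - B into B one at a time, putting each on the side of a maximum cut
   of the current multiset to which it has the smaller total distance.  A point c added to a
   multiset D thus gains at least half of its total distance to D.  Summing over the points of
   A - B, every point of B is met once and every pair of points of A - B once, whereas
   cut (A - B) (A - B) counts such pairs twice: this gives the factors 1/2 and 1/4. *)

lemma finite_subsets_mset: "finite {T. T \<subseteq># S}"
proof -
  have "{T. T \<subseteq># S} \<subseteq> mset ` {xs. set xs \<subseteq> set_mset S \<and> length xs \<le> size S}"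
  proof
    fix T assume "T \<in> {T. T \<subseteq># S}"
    moreover obtain xs where "mset xs = T" using ex_mset by blast
    ultimately show "T \<in> mset ` {xs. set xs \<subseteq> set_mset S \<and> length xs \<le> size S}"
      by (metis (mono_tags) image_eqI mem_Collect_eq set_mset_mono set_mset_mset
          size_mset size_mset_mono)
  qed
  then show ?thesis
    by (rule finite_subset) (auto intro: finite_lists_length_le)
qed

lemma cut_add_mset_left: "cut (add_mset x S) T = (\<Sum>y\<in>#T. dist x y) + cut S T"
  by (simp add: cut_def)

lemma cut_add_mset_right: "cut S (add_mset y T) = (\<Sum>x\<in>#S. dist x y) + cut S T"
  by (simp add: cut_def sum_mset.distrib)

lemma MaxCut_ge: "T \<subseteq># S \<Longrightarrow> cut T (S - T) \<le> MaxCut S"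
  unfolding MaxCut_def by (rule Max_ge) (auto simp: finite_subsets_mset)

lemma MaxCut_attained: obtains T where "T \<subseteq># S" "MaxCut S = cut T (S - T)"
proof -
  have "MaxCut S \<in> (\<lambda>T. cut T (S - T)) ` {T. T \<subseteq># S}"
    unfolding MaxCut_def by (rule Max_in) (auto simp: finite_subsets_mset)
  then show ?thesis using that by blast
qed

lemma MaxCut_add_mset_ge:
  "MaxCut D + 1/2 * (\<Sum>y\<in>#D. dist c y) \<le> MaxCut (add_mset c D)"
proof -
  obtain T where T: "T \<subseteq># D" "MaxCut D = cut T (D - T)"
    using MaxCut_attained .
  define to_T where "to_T = (\<Sum>y\<in>#T. dist c y)"
  define to_rest where "to_rest = (\<Sum>y\<in>#D - T. dist c y)"
  have split: "(\<Sum>y\<in>#D. dist c y) = to_T + to_rest"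
    unfolding to_T_def to_rest_def
    by (subst subset_mset.add_diff_inverse[OF T(1), symmetric]) simp
  have "MaxCut D + to_rest = cut (add_mset c T) (add_mset c D - add_mset c T)"
    using T(2) by (simp add: cut_add_mset_left to_rest_def)
  also have "\<dots> \<le> MaxCut (add_mset c D)"
    using T(1) by (intro MaxCut_ge) simp
  finally have c_joins_T: "MaxCut D + to_rest \<le> MaxCut (add_mset c D)" .
  have "add_mset c D - T = add_mset c (D - T)"
    using T(1) by (metis add_mset_add_single subset_mset.add_diff_assoc2)
  then have "MaxCut D + to_T = cut T (add_mset c D - T)"
    using T(2) by (simp add: cut_add_mset_right dist_commute to_T_def)
  also have "\<dots> \<le> MaxCut (add_mset c D)"
    by (intro MaxCut_ge subset_mset.order_trans[OF T(1)]) simp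
  finally have c_joins_rest: "MaxCut D + to_T \<le> MaxCut (add_mset c D)" .
  show ?thesis
    using split c_joins_T c_joins_rest by linarith
qed

lemma MaxCut_union_ge:
  "MaxCut D + 1/2 * cut C D + 1/4 * cut C C \<le> MaxCut (D + C)"
proof (induction C)
  case empty
  then show ?case by (simp add: cut_def)
next
  case (add c C)
  have "cut (add_mset c C) (add_mset c C) = 2 * (\<Sum>y\<in>#C. dist c y) + cut C C"
    by (simp add: cut_add_mset_left cut_add_mset_right dist_commute)
  moreover have "(\<Sum>y\<in>#D + C. dist c y) = (\<Sum>y\<in>#D. dist c y) + (\<Sum>y\<in>#C. dist c y)"
    by simp
  ultimately show ?case
    using add.IH MaxCut_add_mset_ge[of "D + C" c]
    by (simp add: cut_add_mset_left field_simps)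
qed

theorem fact4p6:
  fixes A B :: "'a::metric_space multiset"
  assumes "B \<subseteq># A"
  shows "MaxCut B + 1/4 * cut (A - B) (A - B) + 1/2 * cut (A - B) B \<le> MaxCut A"
  using MaxCut_union_ge[of B "A - B"] assms by simp

end
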